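(* Let $G$ be a finite simple graph, let $I$ be a maximum critical independent set in $G$, and let $X=I\cup N(I)$. Then $\operatorname{diadem}(G)\cup N(\operatorname{diadem}(G)) = X$.
   Context: For $Y\subseteq V(G)$, $N(Y)$ is the set of vertices adjacent to some vertex of $Y$, and $d(Y)=|Y|-|N(Y)|$. An independent set $S$ is critical if $d(S)=\max\{d(Y):Y\subseteq V(G)\}$; the empty set may be critical. A maximum critical independent set is a critical independent set of maximum cardinality. $\operatorname{diadem}(G)$ is the union of all maximum critical independent sets of $G$. *)

theory Defs
  imports Main
begin

definition simple_graph :: "'a set \<Rightarrow> ('a \<Rightarrow> 'a \<Rightarrow> bool) \<Rightarrow> bool" where
  "simple_graph V E \<longleftrightarrow> finite V \<and> (\<forall>x y. E x y \<longrightarrow> x \<in> V \<and> y \<in> V)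
     \<and> (\<forall>x y. E x y \<longrightarrow> E y x) \<and> (\<forall>x. \<not> E x x)"

definition nbhd :: "'a set \<Rightarrow> ('a \<Rightarrow> 'a \<Rightarrow> bool) \<Rightarrow> 'a set \<Rightarrow> 'a set" where
  "nbhd V E Y = {v \<in> V. \<exists>y\<in>Y. E v y}"

definition diff :: "'a set \<Rightarrow> ('a \<Rightarrow> 'a \<Rightarrow> bool) \<Rightarrow> 'a set \<Rightarrow> int" where
  "diff V E Y = int (card Y) - int (card (nbhd V E Y))"

definition independent :: "'a set \<Rightarrow> ('a \<Rightarrow> 'a \<Rightarrow> bool) \<Rightarrow> 'a set \<Rightarrow> bool" where
  "independent V E S \<longleftrightarrow> S \<subseteq> V \<and> (\<forall>x\<in>S. \<forall>y\<in>S. \<not> E x y)"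

definition critical_independent :: "'a set \<Rightarrow> ('a \<Rightarrow> 'a \<Rightarrow> bool) \<Rightarrow> 'a set \<Rightarrow> bool" where
  "critical_independent V E S \<longleftrightarrow> independent V E S \<and>
     diff V E S = Max ((diff V E) ` Pow V)"

definition max_critical_independent :: "'a set \<Rightarrow> ('a \<Rightarrow> 'a \<Rightarrow> bool) \<Rightarrow> 'a set \<Rightarrow> bool" where
  "max_critical_independent V E S \<longleftrightarrow> critical_independent V E S \<and>
     (\<forall>T. critical_independent V E T \<longrightarrow> card T \<le> card S)"

definition diadem :: "'a set \<Rightarrow> ('a \<Rightarrow> 'a \<Rightarrow> bool) \<Rightarrow> 'a set" where
  "diadem V E = \<Union> {S. max_critical_independent V E S}"

end

theory Submission
  imports Defs
begin

(* Call a vertex set X critical if d(X) is maximal. Since d is supermodular, critical sets are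
   closed under union and intersection, and for critical X the independent set X - N(X) is again
   critical. For maximum critical independent sets I and J this makes I \<union> ((I \<union> J) - N(I \<union> J))
   critical independent, so maximality of I gives J - N(I) \<subseteq> I. Criticality of I \<inter> J together
   with |I| = |J| then forces N(J) - N(I) = I - J by counting, so every maximum critical
   independent set has the same closed neighbourhood as I. *)

lemma simple_graphD:
  assumes "simple_graph V E"
  shows "finite V" and "E x y \<Longrightarrow> E y x"
  using assms by (auto simp: simple_graph_def)

lemma nbhd_subset: "nbhd V E S \<subseteq> V"
  by (auto simp: nbhd_def)

lemma finite_nbhd: "finite V \<Longrightarrow> finite (nbhd V E S)"
  using nbhd_subset finite_subset by metis

lemma nbhd_Un: "nbhd V E (S \<union> T) = nbhd V E S \<union> nbhd V E T"
  by (auto simp: nbhd_def)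

lemma nbhd_mono: "S \<subseteq> T \<Longrightarrow> nbhd V E S \<subseteq> nbhd V E T"
  by (auto simp: nbhd_def)

lemma nbhd_Int_subset: "nbhd V E (S \<inter> T) \<subseteq> nbhd V E S \<inter> nbhd V E T"
  by (auto simp: nbhd_def)

lemma independent_nbhd_disjoint: "independent V E S \<Longrightarrow> S \<inter> nbhd V E S = {}"
  by (auto simp: independent_def nbhd_def)

lemma diff_supermodular:
  assumes "finite V" "finite S" "finite T"
  shows "diff V E S + diff V E T \<le> diff V E (S \<union> T) + diff V E (S \<inter> T)"
proof -
  let ?N = "nbhd V E"
  have "card (S \<union> T) + card (S \<inter> T) = card S + card T"
    using card_Un_Int[OF assms(2,3)] by simp
  moreover have "card (?N S \<union> ?N T) + card (?N S \<inter> ?N T) = card (?N S) + card (?N T)"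
    using card_Un_Int[OF finite_nbhd finite_nbhd, of V V E S E T] assms(1) by simp
  moreover have "card (?N (S \<inter> T)) \<le> card (?N S \<inter> ?N T)"
    by (intro card_mono nbhd_Int_subset) (simp add: assms(1) finite_nbhd)
  ultimately show ?thesis
    unfolding diff_def nbhd_Un by linarith
qed

lemma diff_le_diff_Diff_nbhd:
  assumes "finite V" "X \<subseteq> V" and sym: "\<And>x y. E x y \<Longrightarrow> E y x"
  shows "diff V E X \<le> diff V E (X - nbhd V E X)"
proof -
  let ?N = "nbhd V E"
  have "finite X" using assms(1,2) finite_subset by blast
  \<comment> \<open>a neighbour of X - N(X) lying in X would put its partner into N(X)\<close>
  have "?N (X - ?N X) \<subseteq> ?N X - X"
    using sym assms(2) by (auto simp: nbhd_def)
  then have "card (?N (X - ?N X)) \<le> card (?N X - X)"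
    by (intro card_mono) (simp_all add: assms(1) finite_nbhd)
  moreover have "card X = card (X \<inter> ?N X) + card (X - ?N X)"
    using card_Int_Diff[OF \<open>finite X\<close>] .
  moreover have "card (?N X) = card (X \<inter> ?N X) + card (?N X - X)"
    using card_Int_Diff[OF finite_nbhd[OF assms(1)], of E X X] by (simp add: Int_commute)
  ultimately show ?thesis
    unfolding diff_def by linarith
qed

lemma diff_le_Max:
  assumes "finite V" "S \<subseteq> V"
  shows "diff V E S \<le> Max (diff V E ` Pow V)"
  using assms by (intro Max_ge) auto

definition critical :: "'a set \<Rightarrow> ('a \<Rightarrow> 'a \<Rightarrow> bool) \<Rightarrow> 'a set \<Rightarrow> bool" where
  "critical V E X \<longleftrightarrow> X \<subseteq> V \<and> diff V E X = Max (diff V E ` Pow V)"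

lemma critical_independent_iff:
  "critical_independent V E S \<longleftrightarrow> independent V E S \<and> critical V E S"
  by (auto simp: critical_independent_def critical_def independent_def)

lemma critical_Un_Int:
  assumes "finite V" "critical V E X" "critical V E Y"
  shows "critical V E (X \<union> Y)" and "critical V E (X \<inter> Y)"
proof -
  have sub: "X \<subseteq> V" "Y \<subseteq> V" using assms(2,3) by (auto simp: critical_def)
  then have "finite X" "finite Y" using assms(1) finite_subset by auto
  then have "diff V E X + diff V E Y \<le> diff V E (X \<union> Y) + diff V E (X \<inter> Y)"
    using diff_supermodular assms(1) by blast
  moreover have "diff V E (X \<union> Y) \<le> Max (diff V E ` Pow V)"
    and "diff V E (X \<inter> Y) \<le> Max (diff V E ` Pow V)"
    using diff_le_Max[OF assms(1)] sub by blast+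
  ultimately show "critical V E (X \<union> Y)" and "critical V E (X \<inter> Y)"
    using assms(2,3) sub by (auto simp: critical_def)
qed

lemma critical_Diff_nbhd:
  assumes "finite V" "critical V E X" and sym: "\<And>x y. E x y \<Longrightarrow> E y x"
  shows "critical V E (X - nbhd V E X)"
proof -
  have "X \<subseteq> V" using assms(2) by (simp add: critical_def)
  have "diff V E X \<le> diff V E (X - nbhd V E X)"
    by (rule diff_le_diff_Diff_nbhd[OF assms(1) \<open>X \<subseteq> V\<close> sym])
  moreover have "diff V E (X - nbhd V E X) \<le> Max (diff V E ` Pow V)"
    using diff_le_Max[OF assms(1)] \<open>X \<subseteq> V\<close> by blast
  ultimately show ?thesis
    using assms(2) \<open>X \<subseteq> V\<close> by (auto simp: critical_def)
qed

lemma max_critical_independent_card_eq: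
  "max_critical_independent V E I \<Longrightarrow> max_critical_independent V E J \<Longrightarrow> card I = card J"
  by (auto simp: max_critical_independent_def intro: antisym)

lemma max_critical_independent_absorbs:
  assumes "finite V" "max_critical_independent V E I" "critical_independent V E (I \<union> S)"
  shows "S \<subseteq> I"
proof -
  have "I \<union> S \<subseteq> V" using assms(3) by (simp add: critical_independent_def independent_def)
  then have "finite (I \<union> S)" using assms(1) finite_subset by blast
  moreover have "card (I \<union> S) \<le> card I" using assms(2,3) by (simp add: max_critical_independent_def)
  ultimately have "I \<union> S = I" using card_seteq[of "I \<union> S" I] by blast
  then show ?thesis by blast
qed

lemma independent_Un_Diff_nbhd:
  assumes "independent V E I" "I \<subseteq> K" "K \<subseteq> V" and sym: "\<And>x y. E x y \<Longrightarrow> E y x"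
  shows "independent V E (I \<union> (K - nbhd V E K))"
proof -
  have "\<not> E x y" if "x \<in> I \<union> (K - nbhd V E K)" "y \<in> I \<union> (K - nbhd V E K)" for x y
  proof
    assume "E x y"
    moreover from this have "E y x" by (rule sym)
    ultimately show False
      using that assms(1-3) unfolding independent_def nbhd_def by blast
  qed
  then show ?thesis
    using assms(1,3) by (auto simp: independent_def)
qed

lemma max_critical_independent_Diff_nbhd_subset:
  assumes G: "simple_graph V E"
    and I: "max_critical_independent V E I" and J: "max_critical_independent V E J"
  shows "J - nbhd V E I \<subseteq> I"
proof -
  let ?N = "nbhd V E" and ?K = "I \<union> J"
  have fin: "finite V" and sym: "\<And>x y. E x y \<Longrightarrow> E y x" using simple_graphD[OF G] by auto
  have iI: "independent V E I" "critical V E I" and iJ: "independent V E J" "critical V E J"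
    using I J by (auto simp: max_critical_independent_def critical_independent_iff)
  have "critical V E ?K" using critical_Un_Int(1)[OF fin iI(2) iJ(2)] .
  then have "critical V E (?K - ?N ?K)" by (rule critical_Diff_nbhd[where E = E, OF fin _ sym])
  then have "critical V E (I \<union> (?K - ?N ?K))" using critical_Un_Int(1)[OF fin iI(2)] by blast
  moreover have "independent V E (I \<union> (?K - ?N ?K))"
  proof (rule independent_Un_Diff_nbhd[OF iI(1) _ _ sym])
    show "?K \<subseteq> V" using iI(1) iJ(1) by (auto simp: independent_def)
  qed blast
  ultimately have "?K - ?N ?K \<subseteq> I"
    using max_critical_independent_absorbs[OF fin I] by (simp add: critical_independent_iff)
  moreover have "J - ?N I \<subseteq> ?K - ?N ?K"
    using independent_nbhd_disjoint[OF iJ(1)] by (auto simp: nbhd_Un)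
  ultimately show ?thesis by blast
qed

lemma card_nbhd_Diff_le:
  assumes fin: "finite V"
    and I: "max_critical_independent V E I" and J: "max_critical_independent V E J"
  shows "card (nbhd V E J - nbhd V E I) \<le> card (I - J)"
proof -
  let ?N = "nbhd V E" and ?C = "I \<inter> J"
  have cI: "critical V E I" and cJ: "critical V E J"
    using I J by (auto simp: max_critical_independent_def critical_independent_iff)
  have "finite I" using cI fin finite_subset by (auto simp: critical_def)
  have "diff V E ?C = diff V E J"
    using critical_Un_Int(2)[OF fin cI cJ] cJ by (simp add: critical_def)
  then have "int (card J) - int (card ?C) = int (card (?N J)) - int (card (?N ?C))"
    by (simp add: diff_def)
  moreover have "card (?N J - ?N I) \<le> card (?N J - ?N ?C)"
    using nbhd_Int_subset[of V E I J] by (intro card_mono) (auto simp: fin finite_nbhd)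
  moreover have "card (?N J - ?N ?C) = card (?N J) - card (?N ?C)"
    and "card (?N ?C) \<le> card (?N J)"
    using nbhd_Int_subset[of V E I J] fin finite_nbhd by (auto intro!: card_Diff_subset card_mono)
  moreover have "card (I - J) = card I - card ?C" and "card ?C \<le> card I"
    using \<open>finite I\<close> by (auto simp: card_Diff_subset_Int intro: card_mono)
  ultimately show ?thesis
    using max_critical_independent_card_eq[OF I J] by linarith
qed

lemma max_critical_independent_closed_nbhd_subset:
  assumes G: "simple_graph V E"
    and I: "max_critical_independent V E I" and J: "max_critical_independent V E J"
  shows "J \<union> nbhd V E J \<subseteq> I \<union> nbhd V E I"
proof -
  let ?N = "nbhd V E"
  have "independent V E I"
    using I by (simp add: max_critical_independent_def critical_independent_def)
  then have "I - J \<subseteq> ?N J - ?N I"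
    using max_critical_independent_Diff_nbhd_subset[OF G J I] independent_nbhd_disjoint by blast
  moreover have "finite (?N J - ?N I)" using simple_graphD(1)[OF G] finite_nbhd by blast
  ultimately have "I - J = ?N J - ?N I"
    using card_seteq card_nbhd_Diff_le[OF simple_graphD(1)[OF G] I J] by blast
  then show ?thesis
    using max_critical_independent_Diff_nbhd_subset[OF G I J] by blast
qed

theorem lemma2p1:
  fixes V :: "'a set" and E :: "'a \<Rightarrow> 'a \<Rightarrow> bool" and I :: "'a set"
  assumes "simple_graph V E"
    and "max_critical_independent V E I"
  shows "diadem V E \<union> nbhd V E (diadem V E) = I \<union> nbhd V E I"
proof
  show "diadem V E \<union> nbhd V E (diadem V E) \<subseteq> I \<union> nbhd V E I"
  proof
    fix x assume "x \<in> diadem V E \<union> nbhd V E (diadem V E)"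
    then obtain J where "max_critical_independent V E J" "x \<in> J \<union> nbhd V E J"
      unfolding diadem_def nbhd_def by blast
    then show "x \<in> I \<union> nbhd V E I"
      using max_critical_independent_closed_nbhd_subset[OF assms] by blast
  qed
next
  have "I \<subseteq> diadem V E" using assms(2) unfolding diadem_def by blast
  then show "I \<union> nbhd V E I \<subseteq> diadem V E \<union> nbhd V E (diadem V E)"
    using nbhd_mono by blast
qed

end
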